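(* Let $(X,d)$ be a complete non-trivial quasi-metric space ($d(x,y)\ge0$, $d(x,y)=0\iff x=y$, $d(x,y)=d(y,x)$) such that there is a constant $K\in[1,\infty)$ with the quadrilateral inequality $d(x,y)\le K[d(x,z)+d(z,v)+d(v,y)]$ for all $x,y,z,v\in X$. Let $f:X\to X$ satisfy $d(f(x),f(y))\le\alpha\,d(x,y)$ for all $x,y\in X$, with a constant $\alpha\in(0,1)$ such that $\alpha<1/K$. Then $f$ has a unique fixed point $x^*\in X$; for every $x_0\in X$ the iterates $x_{n+1}=f(x_n)$, $n=0,1,2,\dots$, converge to $x^*$, and $$d(x^*,x_n)\le\frac{K\alpha^n}{1-\alpha K}\,d(x_0,x_1)\quad\text{for all } n.$$ *)

theory Defs
  imports Complex_Main
begin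

definition quad_quasi_metric :: "'a set \<Rightarrow> ('a \<Rightarrow> 'a \<Rightarrow> real) \<Rightarrow> real \<Rightarrow> bool" where
  "quad_quasi_metric X d K \<longleftrightarrow>
     (\<forall>x\<in>X. \<forall>y\<in>X. d x y \<ge> 0) \<and>
     (\<forall>x\<in>X. \<forall>y\<in>X. d x y = 0 \<longleftrightarrow> x = y) \<and>
     (\<forall>x\<in>X. \<forall>y\<in>X. d x y = d y x) \<and>
     (\<forall>x\<in>X. \<forall>y\<in>X. \<forall>z\<in>X. \<forall>v\<in>X. d x y \<le> K * (d x z + d z v + d v y))"

definition qm_converges :: "('a \<Rightarrow> 'a \<Rightarrow> real) \<Rightarrow> (nat \<Rightarrow> 'a) \<Rightarrow> 'a \<Rightarrow> bool" where
  "qm_converges d s x \<longleftrightarrow> (\<lambda>n. d (s n) x) \<longlonglongrightarrow> 0"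

definition qm_Cauchy :: "('a \<Rightarrow> 'a \<Rightarrow> real) \<Rightarrow> (nat \<Rightarrow> 'a) \<Rightarrow> bool" where
  "qm_Cauchy d s \<longleftrightarrow> (\<forall>e>0. \<exists>N. \<forall>m\<ge>N. \<forall>n\<ge>N. d (s m) (s n) < e)"

definition qm_complete :: "'a set \<Rightarrow> ('a \<Rightarrow> 'a \<Rightarrow> real) \<Rightarrow> bool" where
  "qm_complete X d \<longleftrightarrow>
     (\<forall>s. (\<forall>n. s n \<in> X) \<longrightarrow> qm_Cauchy d s \<longrightarrow> (\<exists>x\<in>X. qm_converges d s x))"

end

theory Submission
  imports Defs
begin

text \<open>For \<open>C = K / (1 - \<alpha> * K)\<close>, strong induction on \<open>p\<close> gives
  \<open>d x ((f ^^ p) x) \<le> C * d x (f x)\<close>: one quadrilateral step through \<open>f x\<close> and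
  \<open>f (f x)\<close> reduces \<open>p\<close> to \<open>p - 2\<close>, and the induction closes because
  \<open>K * (1 + \<alpha> + \<alpha>\<^sup>2 * C) \<le> C\<close>, which is where \<open>K \<ge> 1\<close> and \<open>\<alpha> * K < 1\<close> enter.
  Contracting \<open>m\<close> times bounds \<open>d ((f ^^ m) x) ((f ^^ (m + p)) x)\<close> by
  \<open>\<alpha> ^ m * C * d x (f x)\<close>, so the orbit is Cauchy. Since \<open>d\<close> need not be continuous,
  both the fixed-point property of the limit and the error estimate are obtained by passing
  to the limit inside one more quadrilateral inequality.\<close>

lemma quad_quasi_metric_nonneg:
  "quad_quasi_metric X d K \<Longrightarrow> x \<in> X \<Longrightarrow> y \<in> X \<Longrightarrow> 0 \<le> d x y"
  unfolding quad_quasi_metric_def by blast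

lemma quad_quasi_metric_eq_0_iff:
  "quad_quasi_metric X d K \<Longrightarrow> x \<in> X \<Longrightarrow> y \<in> X \<Longrightarrow> d x y = 0 \<longleftrightarrow> x = y"
  unfolding quad_quasi_metric_def by blast

lemma quad_quasi_metric_sym:
  "quad_quasi_metric X d K \<Longrightarrow> x \<in> X \<Longrightarrow> y \<in> X \<Longrightarrow> d x y = d y x"
  unfolding quad_quasi_metric_def by blast

lemma quad_quasi_metric_quadrilateral:
  "quad_quasi_metric X d K \<Longrightarrow> x \<in> X \<Longrightarrow> y \<in> X \<Longrightarrow> z \<in> X \<Longrightarrow> v \<in> X \<Longrightarrow>
    d x y \<le> K * (d x z + d z v + d v y)"
  unfolding quad_quasi_metric_def by blast

lemma quad_quasi_metric_triangle:
  assumes "quad_quasi_metric X d K" "x \<in> X" "y \<in> X" "z \<in> X"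
  shows "d x y \<le> K * (d x z + d z y)"
  using quad_quasi_metric_quadrilateral[OF assms(1-3) assms(4) assms(4)]
    quad_quasi_metric_eq_0_iff[OF assms(1) assms(4) assms(4)] by simp

locale quad_contraction =
  fixes X :: "'a set" and d :: "'a \<Rightarrow> 'a \<Rightarrow> real" and K \<alpha> :: real and f :: "'a \<Rightarrow> 'a"
  assumes qm: "quad_quasi_metric X d K"
    and K_ge_1: "K \<ge> 1"
    and maps_into: "\<forall>x\<in>X. f x \<in> X"
    and contraction: "\<forall>x\<in>X. \<forall>y\<in>X. d (f x) (f y) \<le> \<alpha> * d x y"
    and alpha_nonneg: "0 \<le> \<alpha>"
    and alpha_K_less_1: "\<alpha> * K < 1"
begin

lemmas dist_nonneg = quad_quasi_metric_nonneg[OF qm]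
  and dist_eq_0_iff = quad_quasi_metric_eq_0_iff[OF qm]
  and dist_commute = quad_quasi_metric_sym[OF qm]
  and quadrilateral = quad_quasi_metric_quadrilateral[OF qm]
  and triangle = quad_quasi_metric_triangle[OF qm]

lemma alpha_less_1: "\<alpha> < 1"
  using mult_left_mono[OF K_ge_1 alpha_nonneg] alpha_K_less_1 by simp

lemma map_in: "x \<in> X \<Longrightarrow> f x \<in> X"
  using maps_into by blast

lemma iterate_in: "x \<in> X \<Longrightarrow> (f ^^ n) x \<in> X"
  by (induction n) (auto simp: map_in)

lemma dist_iterate_le:
  assumes "x \<in> X" "y \<in> X"
  shows "d ((f ^^ n) x) ((f ^^ n) y) \<le> \<alpha> ^ n * d x y"
proof (induction n)
  case (Suc n)
  have "d ((f ^^ Suc n) x) ((f ^^ Suc n) y) \<le> \<alpha> * d ((f ^^ n) x) ((f ^^ n) y)"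
    using contraction iterate_in assms by simp
  also have "\<dots> \<le> \<alpha> * (\<alpha> ^ n * d x y)"
    using Suc alpha_nonneg by (simp add: mult_left_mono)
  finally show ?case by simp
qed simp

lemma fixed_point_unique:
  assumes "x \<in> X" "y \<in> X" "f x = x" "f y = y"
  shows "x = y"
proof -
  have "d x y \<le> \<alpha> * d x y"
    using contraction assms by metis
  with alpha_less_1 dist_nonneg[OF assms(1,2)] have "d x y = 0"
    by (smt (verit) mult_le_cancel_right1)
  with dist_eq_0_iff assms show ?thesis by blast
qed

definition orbit_factor :: real where
  "orbit_factor = K / (1 - \<alpha> * K)"

lemma orbit_factor_ge_K: "K \<le> orbit_factor"
proof -
  have "K * (1 - \<alpha> * K) \<le> K"
    using alpha_nonneg K_ge_1 by (simp add: algebra_simps)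
  then show ?thesis
    using alpha_K_less_1 unfolding orbit_factor_def by (simp add: field_simps)
qed

lemma orbit_factor_recursion: "K * (1 + \<alpha> + \<alpha>\<^sup>2 * orbit_factor) \<le> orbit_factor"
proof -
  have pos: "1 - \<alpha> * K > 0"
    using alpha_K_less_1 by simp
  have C: "orbit_factor * (1 - \<alpha> * K) = K"
    using pos unfolding orbit_factor_def by simp
  have "K * (1 + \<alpha> + \<alpha>\<^sup>2 * orbit_factor) * (1 - \<alpha> * K)
      = K * (1 + \<alpha>) * (1 - \<alpha> * K) + K * \<alpha>\<^sup>2 * (orbit_factor * (1 - \<alpha> * K))"
    by (simp add: algebra_simps)
  also have "\<dots> = K * (1 - \<alpha> * (K - 1))"
    unfolding C by (simp add: algebra_simps power2_eq_square)
  also have "\<dots> \<le> K"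
    using alpha_nonneg K_ge_1 by simp
  also have "\<dots> = orbit_factor * (1 - \<alpha> * K)"
    using C by simp
  finally show ?thesis
    using pos by simp
qed

lemma dist_orbit_le:
  assumes x: "x \<in> X"
  shows "d x ((f ^^ p) x) \<le> orbit_factor * d x (f x)"
proof (induction p rule: less_induct)
  case (less p)
  have d1: "0 \<le> d x (f x)"
    using dist_nonneg[OF x map_in[OF x]] .
  consider "p = 0" | "p = 1" | q where "p = q + 2"
    by (metis add_2_eq_Suc' not0_implies_Suc One_nat_def)
  then show ?case
  proof cases
    case 1
    then show ?thesis
      using dist_eq_0_iff[OF x x] d1 orbit_factor_ge_K K_ge_1 by simp
  next
    case 2
    then show ?thesis
      using mult_right_mono[OF order_trans[OF K_ge_1 orbit_factor_ge_K] d1] by simp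
  next
    case (3 q)
    have step1: "d (f x) (f (f x)) \<le> \<alpha> * d x (f x)"
      using contraction x map_in by simp
    have "d (f (f x)) ((f ^^ p) x) = d ((f ^^ 2) x) ((f ^^ 2) ((f ^^ q) x))"
      using 3 by (simp add: funpow_add numeral_2_eq_2)
    also have "\<dots> \<le> \<alpha>\<^sup>2 * d x ((f ^^ q) x)"
      using dist_iterate_le[OF x iterate_in[OF x]] .
    also have "\<dots> \<le> \<alpha>\<^sup>2 * (orbit_factor * d x (f x))"
      using less.IH[of q] 3 by (simp add: mult_left_mono)
    finally have step2: "d (f (f x)) ((f ^^ p) x) \<le> \<alpha>\<^sup>2 * (orbit_factor * d x (f x))" .
    have "d x ((f ^^ p) x) \<le> K * (d x (f x) + d (f x) (f (f x)) + d (f (f x)) ((f ^^ p) x))"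
      using quadrilateral[OF x iterate_in[OF x] map_in[OF x] map_in[OF map_in[OF x]]] .
    also have "\<dots> \<le> K * (d x (f x) + \<alpha> * d x (f x) + \<alpha>\<^sup>2 * (orbit_factor * d x (f x)))"
      using step1 step2 K_ge_1 by (intro mult_left_mono) auto
    also have "\<dots> = K * (1 + \<alpha> + \<alpha>\<^sup>2 * orbit_factor) * d x (f x)"
      by (simp add: algebra_simps)
    also have "\<dots> \<le> orbit_factor * d x (f x)"
      using orbit_factor_recursion d1 by (rule mult_right_mono)
    finally show ?thesis .
  qed
qed

lemma dist_iterates_le:
  assumes x: "x \<in> X"
  shows "d ((f ^^ m) x) ((f ^^ n) x) \<le> \<alpha> ^ min m n * (orbit_factor * d x (f x))"
proof -
  have le: "d ((f ^^ m) x) ((f ^^ (m + p)) x) \<le> \<alpha> ^ m * (orbit_factor * d x (f x))" for m p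
  proof -
    have "d ((f ^^ m) x) ((f ^^ (m + p)) x) = d ((f ^^ m) x) ((f ^^ m) ((f ^^ p) x))"
      by (simp add: funpow_add)
    also have "\<dots> \<le> \<alpha> ^ m * d x ((f ^^ p) x)"
      using dist_iterate_le[OF x iterate_in[OF x]] .
    also have "\<dots> \<le> \<alpha> ^ m * (orbit_factor * d x (f x))"
      using dist_orbit_le[OF x] alpha_nonneg by (simp add: mult_left_mono)
    finally show ?thesis .
  qed
  show ?thesis
  proof (cases "m \<le> n")
    case True
    then show ?thesis
      using le[of m "n - m"] by simp
  next
    case False
    then show ?thesis
      using le[of n "m - n"] dist_commute x iterate_in by simp
  qed
qed

lemma orbit_Cauchy:
  assumes x: "x \<in> X"
  shows "qm_Cauchy d (\<lambda>n. (f ^^ n) x)"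
  unfolding qm_Cauchy_def
proof (intro allI impI)
  fix e :: real
  assume "e > 0"
  have "(\<lambda>n. \<alpha> ^ n * (orbit_factor * d x (f x))) \<longlonglongrightarrow> 0"
    using alpha_nonneg alpha_less_1 by (intro tendsto_mult_left_zero LIMSEQ_power_zero) auto
  with \<open>e > 0\<close> obtain N where N: "\<And>n. n \<ge> N \<Longrightarrow> \<alpha> ^ n * (orbit_factor * d x (f x)) < e"
    by (metis LIMSEQ_iff diff_zero real_norm_def abs_less_iff)
  show "\<exists>N. \<forall>m\<ge>N. \<forall>n\<ge>N. d ((f ^^ m) x) ((f ^^ n) x) < e"
    using N dist_iterates_le[OF x] by (meson min.boundedI order.strict_trans1)
qed

lemma orbit_converges_to_fixed_point:
  assumes complete: "qm_complete X d" and x: "x \<in> X"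
  obtains L where "L \<in> X" "f L = L" "qm_converges d (\<lambda>n. (f ^^ n) x) L"
proof -
  have "\<exists>L\<in>X. qm_converges d (\<lambda>n. (f ^^ n) x) L"
    using complete orbit_Cauchy[OF x] unfolding qm_complete_def by (simp add: iterate_in[OF x])
  then obtain L where L: "L \<in> X" and conv: "qm_converges d (\<lambda>n. (f ^^ n) x) L" ..
  have lim: "(\<lambda>n. d ((f ^^ n) x) L) \<longlonglongrightarrow> 0"
    using conv unfolding qm_converges_def .
  have "(\<lambda>n. K * (\<alpha> * d ((f ^^ n) x) L + d ((f ^^ Suc n) x) L)) \<longlonglongrightarrow> K * (\<alpha> * 0 + 0)"
    by (intro tendsto_intros lim LIMSEQ_Suc[OF lim])
  moreover have "d (f L) L \<le> K * (\<alpha> * d ((f ^^ n) x) L + d ((f ^^ Suc n) x) L)" for n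
  proof -
    have "d (f L) L \<le> K * (d (f L) (f ((f ^^ n) x)) + d ((f ^^ Suc n) x) L)"
      using triangle[OF map_in[OF L] L map_in[OF iterate_in[OF x]]] by simp
    also have "\<dots> \<le> K * (\<alpha> * d L ((f ^^ n) x) + d ((f ^^ Suc n) x) L)"
      using contraction L x iterate_in K_ge_1 by (intro mult_left_mono add_right_mono) auto
    finally show ?thesis
      using dist_commute[OF L iterate_in[OF x]] by simp
  qed
  ultimately have "d (f L) L \<le> 0"
    by (intro LIMSEQ_le_const) auto
  then have "f L = L"
    using dist_nonneg dist_eq_0_iff L map_in by (meson order_antisym)
  with L conv that show ?thesis by blast
qed

lemma dist_limit_iterate_le:
  assumes x: "x \<in> X" and L: "L \<in> X" and conv: "qm_converges d (\<lambda>n. (f ^^ n) x) L"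
  shows "d L ((f ^^ n) x) \<le> K * \<alpha> ^ n / (1 - \<alpha> * K) * d x (f x)"
proof -
  define b where "b = K * (\<alpha> ^ Suc n * (orbit_factor * d x (f x)) + \<alpha> ^ n * d x (f x))"
  have lim: "(\<lambda>n. d ((f ^^ n) x) L) \<longlonglongrightarrow> 0"
    using conv unfolding qm_converges_def .
  have "(\<lambda>m. K * d ((f ^^ m) x) L + b) \<longlonglongrightarrow> K * 0 + b"
    by (intro tendsto_intros lim)
  moreover have "d L ((f ^^ n) x) \<le> K * d ((f ^^ m) x) L + b" if m: "m \<ge> Suc n" for m
  proof -
    have far: "d ((f ^^ m) x) ((f ^^ Suc n) x) \<le> \<alpha> ^ Suc n * (orbit_factor * d x (f x))"
      using dist_iterates_le[OF x, of m "Suc n"] m by (simp add: min_absorb2)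
    have "d ((f ^^ Suc n) x) ((f ^^ n) x) = d ((f ^^ n) x) ((f ^^ n) (f x))"
      using dist_commute[OF iterate_in[OF x] iterate_in[OF map_in[OF x]], of n n] by (simp add: funpow_swap1)
    also have "\<dots> \<le> \<alpha> ^ n * d x (f x)"
      using dist_iterate_le[OF x map_in[OF x]] .
    finally have near: "d ((f ^^ Suc n) x) ((f ^^ n) x) \<le> \<alpha> ^ n * d x (f x)" .
    have "d L ((f ^^ n) x) \<le> K * (d L ((f ^^ m) x) + d ((f ^^ m) x) ((f ^^ Suc n) x)
        + d ((f ^^ Suc n) x) ((f ^^ n) x))"
      using quadrilateral[OF L iterate_in[OF x] iterate_in[OF x] iterate_in[OF x]] .
    also have "\<dots> \<le> K * (d L ((f ^^ m) x) + \<alpha> ^ Suc n * (orbit_factor * d x (f x))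
        + \<alpha> ^ n * d x (f x))"
      using far near K_ge_1 by (intro mult_left_mono) auto
    also have "\<dots> = K * d ((f ^^ m) x) L + b"
      unfolding b_def using dist_commute L x iterate_in by (simp add: algebra_simps)
    finally show ?thesis .
  qed
  ultimately have "d L ((f ^^ n) x) \<le> K * 0 + b"
    by (intro LIMSEQ_le_const) auto
  also have "K * 0 + b = K * \<alpha> ^ n * (\<alpha> * orbit_factor + 1) * d x (f x)"
    unfolding b_def by (simp add: algebra_simps)
  also have "\<alpha> * orbit_factor + 1 = 1 / (1 - \<alpha> * K)"
    unfolding orbit_factor_def using alpha_K_less_1 by (simp add: field_simps)
  finally show ?thesis
    by simp
qed

end

theorem theorem6p2:
  fixes X :: "'a set" and d :: "'a \<Rightarrow> 'a \<Rightarrow> real" and K \<alpha> :: real and f :: "'a \<Rightarrow> 'a"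
  assumes qm: "quad_quasi_metric X d K"
    and K: "K \<ge> 1"
    and complete: "qm_complete X d"
    and nontriv: "\<exists>x\<in>X. \<exists>y\<in>X. x \<noteq> y"
    and f_into: "\<forall>x\<in>X. f x \<in> X"
    and contr: "\<forall>x\<in>X. \<forall>y\<in>X. d (f x) (f y) \<le> \<alpha> * d x y"
    and \<alpha>: "0 < \<alpha>" "\<alpha> < 1" "\<alpha> < 1 / K"
  shows "\<exists>xs\<in>X. f xs = xs \<and> (\<forall>y\<in>X. f y = y \<longrightarrow> y = xs) \<and>
           (\<forall>x0\<in>X. qm_converges d (\<lambda>n. (f ^^ n) x0) xs \<and>
              (\<forall>n. d xs ((f ^^ n) x0) \<le> K * \<alpha> ^ n / (1 - \<alpha> * K) * d x0 (f x0)))"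
proof -
  interpret quad_contraction X d K \<alpha> f
    using qm K f_into contr \<alpha> by unfold_locales (auto simp: field_simps)
  obtain x where x: "x \<in> X"
    using nontriv by blast
  obtain L where L: "L \<in> X" "f L = L"
    using orbit_converges_to_fixed_point[OF complete x] by blast
  have "qm_converges d (\<lambda>n. (f ^^ n) x0) L \<and>
      (\<forall>n. d L ((f ^^ n) x0) \<le> K * \<alpha> ^ n / (1 - \<alpha> * K) * d x0 (f x0))" if x0: "x0 \<in> X" for x0
  proof -
    obtain L0 where "L0 \<in> X" "f L0 = L0" "qm_converges d (\<lambda>n. (f ^^ n) x0) L0"
      using orbit_converges_to_fixed_point[OF complete x0] by blast
    moreover have "L0 = L"
      using fixed_point_unique L calculation by blast
    ultimately show ?thesis
      using dist_limit_iterate_le[OF x0] L by blast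
  qed
  with L fixed_point_unique show ?thesis
    by blast
qed

end
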